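(* Let $p$ be an odd prime. Then for every $\tau\in\mathbb{H}$, $$\prod_{k=0}^{p-1}\theta_3\Big(\tau+\frac{2k}{p}\Big)=\frac{\theta_3^{p+1}(p\tau)}{\theta_3(p^2\tau)}.$$
   Context: $\mathbb{H}=\{\tau\in\mathbb{C}:\Im(\tau)>0\}$. For $\tau\in\mathbb{H}$, $\theta_3(\tau)=1+2\sum_{\nu=1}^{\infty}e^{\pi i\nu^2\tau}$. *)

theory Defs
  imports "HOL-Analysis.Analysis"
begin

definition theta3 :: "complex \<Rightarrow> complex" where
  "theta3 \<tau> = 1 + 2 * (\<Sum>\<nu>. exp (of_real pi * \<i> * of_nat (Suc \<nu>)^2 * \<tau>))"

end

(*
  Write q = exp(pi i tau), so that theta3 tau = 1 + 2 sum_{n>=1} q^(n^2), and the shift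
  tau -> tau + 2k/p replaces q by q w^k with w = exp(2 pi i/p).  By Jacobi's triple product
  theta3 = prod_{n>=1} (1 - q^(2n)) (1 + q^(2n-1))^2, which follows, via Tannery's theorem,
  from the finite identity (-q;q^2)_n^2 = sum_k [2n,k]_(q^2) q^((k-n)^2), itself a case of
  Cauchy's q-binomial theorem.

  Over the p rotations, prod_k (1 + y w^(mk)) is (1 + y)^p if p divides m and 1 + y^p
  otherwise (p odd).  Regrouping the resulting factors by residue classes mod p shows that the product
  of the rotated partial products of length pM, times the M-th partial product for q^(p^2),
  equals the corresponding partial products for q^p; letting M -> oo gives
  prod_k theta3(tau + 2k/p) * theta3(p^2 tau) = theta3(p tau)^(p+1).
*)

theory Submission
  imports Defs "HOL-Computational_Algebra.Fundamental_Theorem_Algebra"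
begin

section \<open>Products over roots of unity\<close>

lemma power_power_commute: "(a ^ m) ^ n = (a ^ n) ^ m"
  for a :: "'a::monoid_mult"
  by (simp only: mult.commute flip: power_mult)

lemma prod_roots_unity:
  assumes "n > 0"
  shows "(\<Prod>z\<in>{z::complex. z ^ n = 1}. x - z) = x ^ n - 1"
proof -
  define P :: "complex poly" where "P = monom 1 n - 1"
  have poly_P: "poly P z = z ^ n - 1" for z
    by (simp add: P_def poly_monom)
  have lead_P: "lead_coeff P = 1"
    using lead_coeff_add_le[of "-1" "monom 1 n"] assms by (simp add: P_def degree_monom_eq)
  have "rsquarefree P"
    unfolding rsquarefree_roots
  proof (intro allI notI)
    fix a assume "poly P a = 0 \<and> poly (pderiv P) a = 0"
    moreover have "pderiv P = monom (of_nat n) (n - 1)"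
      by (simp add: P_def pderiv_diff pderiv_monom)
    ultimately have "a ^ n = 1" "of_nat n * a ^ (n - 1) = 0"
      by (simp_all add: poly_P poly_monom)
    with assms show False by (auto simp: power_0_left)
  qed
  from complex_poly_decompose_rsquarefree[OF this]
  have "(\<Prod>z | poly P z = 0. [:-z, 1:]) = P" by (simp add: lead_P)
  from arg_cong[OF this, of "\<lambda>Q. poly Q x"] show ?thesis
    by (simp add: poly_prod poly_P)
qed

lemma prod_primitive_root_powers:
  fixes w :: complex
  assumes "n > 0" "w ^ n = 1" and primitive: "\<And>k. w ^ k = 1 \<Longrightarrow> n dvd k"
  shows "(\<Prod>k<n. x - w ^ k) = x ^ n - 1"
proof -
  have "w \<noteq> 0" using assms(1,2) by (auto simp: power_0_left)
  have inj: "inj_on (\<lambda>k. w ^ k) {..<n}"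
  proof (rule linorder_inj_onI', rule notI)
    fix a b assume "a \<in> {..<n}" "b \<in> {..<n}" "a < b" "w ^ a = w ^ b"
    then have "w ^ (b - a) = 1"
      using \<open>w \<noteq> 0\<close> by (simp add: power_diff)
    then have "n dvd b - a" by (rule primitive)
    with \<open>a < b\<close> \<open>b \<in> {..<n}\<close> show False
      by (auto dest: dvd_imp_le)
  qed
  moreover have "(\<lambda>k. w ^ k) ` {..<n} \<subseteq> {z. z ^ n = 1}"
    using assms(2) by (auto simp: power_power_commute[of w _ n])
  moreover have "card ((\<lambda>k. w ^ k) ` {..<n}) = card {z::complex. z ^ n = 1}"
    using inj assms(1) by (simp add: card_image card_roots_unity_eq)
  ultimately have "bij_betw (\<lambda>k. w ^ k) {..<n} {z. z ^ n = 1}"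
    using assms(1) by (simp add: bij_betw_def card_subset_eq finite_roots_unity)
  then show ?thesis
    using prod.reindex_bij_betw prod_roots_unity[OF assms(1)] by metis
qed

lemma prod_one_minus_primitive_root_powers:
  fixes w :: complex
  assumes "n > 0" "w ^ n = 1" "\<And>k. w ^ k = 1 \<Longrightarrow> n dvd k"
  shows "(\<Prod>k<n. 1 - y * w ^ k) = 1 - y ^ n"
proof (cases "y = 0")
  case True
  with assms(1) show ?thesis by (simp add: power_0_left)
next
  case False
  have "(\<Prod>k<n. 1 - y * w ^ k) = (\<Prod>k<n. y * (inverse y - w ^ k))"
    using False by (simp add: right_diff_distrib)
  also have "\<dots> = y ^ n * (inverse y ^ n - 1)"
    by (simp add: prod.distrib prod_primitive_root_powers[OF assms])
  also have "\<dots> = 1 - y ^ n"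
    using False by (simp add: right_diff_distrib power_inverse)
  finally show ?thesis .
qed

lemma cis_power_eq_1_iff:
  fixes n k :: nat
  assumes "n > 0"
  shows "cis (2 * pi / n) ^ k = 1 \<longleftrightarrow> n dvd k"
proof -
  have "cis (2 * pi / n) ^ k = exp (2 * of_real pi * \<i> * of_nat k / of_nat n)"
    by (simp only: Complex.DeMoivre) (simp add: cis_conv_exp mult_ac)
  then show ?thesis
    using complex_root_unity_eq_1[of n k] assms by simp
qed

lemma prod_one_plus_roots_unity:
  fixes p :: nat
  assumes "prime p" "odd p"
  shows "(\<Prod>k<p. 1 + y * cis (2 * pi / p) ^ (m * k)) = (if p dvd m then (1 + y) ^ p else 1 + y ^ p)"
proof -
  define w where "w = cis (2 * pi / p) ^ m"
  have "p > 0" using assms(1) prime_gt_0_nat by blast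
  have w_pow_eq_1_iff: "w ^ k = 1 \<longleftrightarrow> p dvd m * k" for k
    by (simp add: w_def power_mult[symmetric] cis_power_eq_1_iff[OF \<open>p > 0\<close>])
  show ?thesis
  proof (cases "p dvd m")
    case True
    then have "w ^ k = 1" for k by (simp add: w_pow_eq_1_iff)
    with True show ?thesis by (simp add: w_def power_mult)
  next
    case False
    have "(\<Prod>k<p. 1 - (- y) * w ^ k) = 1 - (- y) ^ p"
    proof (rule prod_one_minus_primitive_root_powers[OF \<open>p > 0\<close>])
      show "w ^ p = 1" by (simp add: w_pow_eq_1_iff)
      show "p dvd k" if "w ^ k = 1" for k
        using that False assms(1) by (simp add: w_pow_eq_1_iff prime_dvd_mult_iff)
    qed
    with False assms(2) show ?thesis by (simp add: w_def power_mult)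
  qed
qed

section \<open>$q$-Pochhammer symbols and the $q$-binomial theorem\<close>

text \<open>In the usual notation, \<open>qpoch x n\<close> is $(x;x)_n$ and \<open>qpoch_odd q n\<close> is $(-q;q^2)_n$.\<close>

definition qpoch :: "'a::comm_ring_1 \<Rightarrow> nat \<Rightarrow> 'a" where
  "qpoch x n = (\<Prod>i<n. 1 - x ^ Suc i)"

definition qpoch_odd :: "'a::comm_ring_1 \<Rightarrow> nat \<Rightarrow> 'a" where
  "qpoch_odd q n = (\<Prod>i<n. 1 + q ^ (2 * i + 1))"

fun qbinom :: "'a::comm_ring_1 \<Rightarrow> nat \<Rightarrow> nat \<Rightarrow> 'a" where
  "qbinom x 0 k = (if k = 0 then 1 else 0)"
| "qbinom x (Suc n) 0 = 1"
| "qbinom x (Suc n) (Suc k) = qbinom x n k + x ^ Suc k * qbinom x n (Suc k)"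

lemma qpoch_Suc: "qpoch x (Suc n) = qpoch x n * (1 - x ^ Suc n)"
  by (simp add: qpoch_def)

lemma qbinom_0_right [simp]: "qbinom x n 0 = 1"
  by (cases n) auto

lemma qbinom_eq_0: "n < k \<Longrightarrow> qbinom x n k = 0"
proof (induction n arbitrary: k)
  case (Suc n)
  then show ?case by (cases k) auto
qed simp

lemma qbinom_diag [simp]: "qbinom x n n = 1"
  by (induction n) (auto simp: qbinom_eq_0)

lemma qbinom_mult_qpoch:
  "k \<le> n \<Longrightarrow> qbinom x n k * qpoch x k * qpoch x (n - k) = qpoch x n"
proof (induction n arbitrary: k)
  case 0
  then show ?case by (simp add: qpoch_def)
next
  case (Suc n)
  show ?case
  proof (cases k)
    case 0
    then show ?thesis by (simp add: qpoch_def)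
  next
    case (Suc j)
    show ?thesis
    proof (cases "j = n")
      case True
      with Suc show ?thesis by (simp add: qpoch_def)
    next
      case False
      with Suc \<open>k \<le> Suc n\<close> have "j < n" by simp
      then have "n - j = Suc (n - Suc j)" and "Suc j + (n - j) = Suc n" by simp_all
      then have split: "qpoch x (n - j) = qpoch x (n - Suc j) * (1 - x ^ (n - j))"
        and x_pow: "x ^ Suc j * x ^ (n - j) = x ^ Suc n"
        by (metis qpoch_Suc, simp only: flip: power_add)
      have "qbinom x (Suc n) k * qpoch x k * qpoch x (Suc n - k)
          = (qbinom x n j * qpoch x j * qpoch x (n - j)) * (1 - x ^ Suc j)
            + x ^ Suc j * (qbinom x n (Suc j) * qpoch x (Suc j) * qpoch x (n - Suc j))
              * (1 - x ^ (n - j))"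
        by (simp add: Suc qpoch_Suc split algebra_simps)
      also have "\<dots> = qpoch x n * (1 - x ^ Suc j * x ^ (n - j))"
        using Suc.IH[of j] Suc.IH[of "Suc j"] \<open>j < n\<close> by (simp add: algebra_simps)
      also have "\<dots> = qpoch x (Suc n)"
        by (simp only: x_pow qpoch_Suc)
      finally show ?thesis .
    qed
  qed
qed

lemma Suc_choose_two: "Suc k choose 2 = (k choose 2) + k"
  by (simp add: numeral_2_eq_2)

lemma sum_lessThan_eq_choose_two: "(\<Sum>i<n. i) = n choose 2"
  by (induction n) (simp_all add: Suc_choose_two numeral_2_eq_2)

lemma two_mult_choose_two: "2 * (k choose 2) = k * (k - 1)"
  by (induction k) (auto simp: Suc_choose_two algebra_simps numeral_2_eq_2)

lemma q_binomial_theorem: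
  "(\<Prod>j<N. 1 + x ^ j * t) = (\<Sum>k\<le>N. qbinom x N k * x ^ (k choose 2) * t ^ k)"
proof (induction N arbitrary: t)
  case 0
  then show ?case by (simp add: numeral_2_eq_2)
next
  case (Suc N)
  define f where "f k = qbinom x N k * x ^ (k choose 2) * x ^ k * t ^ k" for k
  define g where "g k = qbinom x N k * x ^ (k choose 2) * x ^ k * t ^ Suc k" for k
  have "(\<Prod>j<Suc N. 1 + x ^ j * t) = (1 + t) * (\<Prod>j<N. 1 + x ^ j * (x * t))"
    by (subst prod.lessThan_Suc_shift) (simp add: mult_ac)
  also have "\<dots> = (\<Sum>k\<le>N. f k) + (\<Sum>k\<le>N. g k)"
    unfolding Suc.IH
    by (simp add: f_def g_def distrib_right sum_distrib_left power_mult_distrib mult_ac sum.distrib)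
  also have "(\<Sum>k\<le>N. f k) = 1 + (\<Sum>k\<le>N. f (Suc k))"
    using sum.atMost_Suc_shift[of f N] by (simp add: f_def qbinom_eq_0 numeral_2_eq_2)
  also have "1 + (\<Sum>k\<le>N. f (Suc k)) + (\<Sum>k\<le>N. g k)
      = 1 + (\<Sum>k\<le>N. qbinom x (Suc N) (Suc k) * x ^ (Suc k choose 2) * t ^ Suc k)"
    by (simp add: f_def g_def Suc_choose_two algebra_simps power_add flip: sum.distrib)
  also have "\<dots> = (\<Sum>k\<le>Suc N. qbinom x (Suc N) k * x ^ (k choose 2) * t ^ k)"
    by (subst sum.atMost_Suc_shift) (simp add: numeral_2_eq_2)
  finally show ?case .
qed

lemma q_binomial_theorem_homogeneous:
  fixes s :: "'a::field"
  assumes "s \<noteq> 0"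
  shows "(\<Prod>j<N. s + x ^ j * t) = (\<Sum>k\<le>N. qbinom x N k * x ^ (k choose 2) * t ^ k * s ^ (N - k))"
proof -
  have "(\<Prod>j<N. s + x ^ j * t) = (\<Prod>j<N. s * (1 + x ^ j * (t / s)))"
    using assms by (simp add: distrib_left)
  also have "\<dots> = s ^ N * (\<Prod>j<N. 1 + x ^ j * (t / s))"
    by (simp add: prod.distrib)
  also have "\<dots> = (\<Sum>k\<le>N. qbinom x N k * x ^ (k choose 2) * t ^ k * s ^ (N - k))"
    unfolding q_binomial_theorem sum_distrib_left
  proof (intro sum.cong refl)
    fix k assume "k \<in> {..N}"
    then have "s ^ N = s ^ (N - k) * s ^ k" by (simp flip: power_add)
    with assms show "s ^ N * (qbinom x N k * x ^ (k choose 2) * (t / s) ^ k)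
        = qbinom x N k * x ^ (k choose 2) * t ^ k * s ^ (N - k)"
      by (simp add: power_divide field_simps)
  qed
  finally show ?thesis .
qed

section \<open>Jacobi's triple product at $z = 1$\<close>

lemma prod_lessThan_add:
  fixes a b :: nat
  shows "(\<Prod>j<a + b. f j) = (\<Prod>j<a. f j) * (\<Prod>i<b. f (a + i))"
  by (induction b) (simp_all add: mult_ac)

lemma sum_lessThan_add:
  fixes a b :: nat
  shows "(\<Sum>j<a + b. f j) = (\<Sum>j<a. f j) + (\<Sum>i<b. f (a + i))"
  by (induction b) (simp_all add: add_ac)

lemma triple_product_exponent:
  assumes "k \<le> 2 * n" "n > 0"
  shows "2 * (k choose 2) + (2 * n - 1) * (2 * n - k)
       = ((k - n)^2 + (n - k)^2) + (2 * (n choose 2) + (2 * n - 1) * n)"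
proof -
  have choose: "2 * int (m choose 2) = int m * (int m - 1)" for m
  proof -
    have "int (2 * (m choose 2)) = int (m * (m - 1))"
      by (simp only: two_mult_choose_two)
    then show ?thesis by (cases m) (simp_all add: algebra_simps)
  qed
  have "int ((k - n)^2 + (n - k)^2) = (int k - int n)^2"
    by (cases "k \<le> n") (simp_all add: of_nat_diff power2_commute)
  moreover have "int (2 * (k choose 2) + (2 * n - 1) * (2 * n - k))
      = int k * (int k - 1) + (2 * int n - 1) * (2 * int n - int k)"
    using assms by (simp add: choose of_nat_diff)
  moreover have "int (2 * (n choose 2) + (2 * n - 1) * n)
      = int n * (int n - 1) + (2 * int n - 1) * int n"
    using assms by (simp add: choose of_nat_diff)
  ultimately show ?thesis
    by (simp add: power2_eq_square algebra_simps flip: of_nat_eq_iff)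
qed

lemma prod_lower_half_eq_qpoch_odd:
  fixes q :: "'a::field"
  shows "(\<Prod>j<n. q ^ (2 * n - 1) + (q^2) ^ j) = q ^ (2 * (n choose 2)) * qpoch_odd q n"
proof -
  have "(\<Prod>j<n. q ^ (2 * n - 1) + (q^2) ^ j) = (\<Prod>i<n. q ^ (2 * n - 1) + (q^2) ^ (n - Suc i))"
    by (rule prod.nat_diff_reindex[symmetric])
  also have "\<dots> = (\<Prod>i<n. q ^ (2 * (n - Suc i)) * (1 + q ^ (2 * i + 1)))"
  proof (intro prod.cong refl)
    fix i assume "i \<in> {..<n}"
    then have "2 * n - 1 = 2 * (n - Suc i) + (2 * i + 1)" by auto
    then have "q ^ (2 * n - 1) = q ^ (2 * (n - Suc i)) * q ^ (2 * i + 1)"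
      by (simp only: flip: power_add)
    moreover have "(q^2) ^ (n - Suc i) = q ^ (2 * (n - Suc i))"
      by (simp only: power_mult)
    ultimately show "q ^ (2 * n - 1) + (q^2) ^ (n - Suc i) = q ^ (2 * (n - Suc i)) * (1 + q ^ (2 * i + 1))"
      by (simp add: algebra_simps)
  qed
  also have "\<dots> = (\<Prod>i<n. q ^ (2 * i)) * qpoch_odd q n"
    by (simp add: prod.distrib qpoch_odd_def prod.nat_diff_reindex[where g="\<lambda>i. q ^ (2 * i)"])
  also have "(\<Prod>i<n. q ^ (2 * i)) = q ^ (2 * (n choose 2))"
    by (simp add: sum_lessThan_eq_choose_two flip: power_sum sum_distrib_left)
  finally show ?thesis .
qed

lemma prod_upper_half_eq_qpoch_odd:
  fixes q :: "'a::field"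
  assumes "n > 0"
  shows "(\<Prod>i<n. q ^ (2 * n - 1) + (q^2) ^ (n + i)) = q ^ ((2 * n - 1) * n) * qpoch_odd q n"
proof -
  have "q ^ (2 * n - 1) + (q^2) ^ (n + i) = q ^ (2 * n - 1) * (1 + q ^ (2 * i + 1))" for i
  proof -
    from assms have "2 * (n + i) = (2 * n - 1) + (2 * i + 1)" by simp
    then have "(q^2) ^ (n + i) = q ^ (2 * n - 1) * q ^ (2 * i + 1)"
      by (simp only: flip: power_mult power_add)
    then show ?thesis by (simp add: algebra_simps)
  qed
  then show ?thesis
    by (simp add: prod.distrib qpoch_odd_def power_mult)
qed

lemma qpoch_odd_square_eq_prod:
  fixes q :: "'a::field"
  assumes "n > 0"
  shows "q ^ (2 * (n choose 2) + (2 * n - 1) * n) * qpoch_odd q n ^ 2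
       = (\<Prod>j<2*n. q ^ (2 * n - 1) + (q^2) ^ j)"
proof -
  have "(\<Prod>j<2*n. q ^ (2 * n - 1) + (q^2) ^ j)
      = (\<Prod>j<n. q ^ (2 * n - 1) + (q^2) ^ j) * (\<Prod>i<n. q ^ (2 * n - 1) + (q^2) ^ (n + i))"
    by (simp only: mult_2 prod_lessThan_add)
  also have "\<dots> = q ^ (2 * (n choose 2)) * qpoch_odd q n * (q ^ ((2 * n - 1) * n) * qpoch_odd q n)"
    by (simp only: prod_lower_half_eq_qpoch_odd prod_upper_half_eq_qpoch_odd[OF assms])
  finally show ?thesis
    by (simp add: power_add power2_eq_square mult_ac)
qed

text \<open>One of the truncated differences in the exponent vanishes, so the exponent is $(k-n)^2$.\<close>

lemma finite_triple_product:
  fixes q :: "'a::field"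
  assumes "q \<noteq> 0"
  shows "qpoch_odd q n ^ 2 = (\<Sum>k\<le>2*n. qbinom (q^2) (2*n) k * q ^ ((k - n)^2 + (n - k)^2))"
proof (cases "n = 0")
  case True
  then show ?thesis by (simp add: qpoch_odd_def)
next
  case False
  define s where "s = q ^ (2 * n - 1)"
  define E where "E = 2 * (n choose 2) + (2 * n - 1) * n"
  have "q ^ E * qpoch_odd q n ^ 2 = (\<Prod>j<2*n. s + (q^2) ^ j * 1)"
    using qpoch_odd_square_eq_prod[of n q] False by (simp add: E_def s_def)
  also have "\<dots> = (\<Sum>k\<le>2*n. qbinom (q^2) (2*n) k * (q^2) ^ (k choose 2) * 1 ^ k * s ^ (2*n - k))"
    using assms by (intro q_binomial_theorem_homogeneous) (simp add: s_def)
  also have "\<dots> = q ^ E * (\<Sum>k\<le>2*n. qbinom (q^2) (2*n) k * q ^ ((k - n)^2 + (n - k)^2))"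
    unfolding sum_distrib_left
  proof (intro sum.cong refl)
    fix k assume "k \<in> {..2*n}"
    with False have "2 * (k choose 2) + (2 * n - 1) * (2 * n - k) = ((k - n)^2 + (n - k)^2) + E"
      unfolding E_def by (intro triple_product_exponent) auto
    then have "(q^2) ^ (k choose 2) * s ^ (2*n - k) = q ^ (((k - n)^2 + (n - k)^2) + E)"
      by (simp add: s_def flip: power_mult power_add)
    then show "qbinom (q^2) (2*n) k * (q^2) ^ (k choose 2) * 1 ^ k * s ^ (2*n - k)
        = q ^ E * (qbinom (q^2) (2*n) k * q ^ ((k - n)^2 + (n - k)^2))"
      by (simp add: power_add mult_ac)
  qed
  finally show ?thesis
    using assms by simp
qed

lemma summable_norm_power_mono:
  fixes q :: "'a::real_normed_algebra_1"
  assumes "norm q < 1" "\<And>i. i \<le> f i"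
  shows "summable (\<lambda>i. norm (q ^ f i))"
proof (rule summable_comparison_test[OF _ summable_geometric[of "norm q"]])
  show "\<exists>N. \<forall>n\<ge>N. norm (norm (q ^ f n)) \<le> norm q ^ n"
    using assms by (auto intro!: order.trans[OF norm_power_ineq] power_decreasing)
qed (use assms in simp)

lemma norm_power_less_one:
  fixes q :: "'a::real_normed_div_algebra"
  assumes "norm q < 1" "m > 0"
  shows "norm (q ^ m) < 1"
  using assms by (simp only: norm_power) (simp add: power_less_one_iff)

lemma partial_prods_tendsto_nonzero:
  fixes z :: "nat \<Rightarrow> complex"
  assumes "summable (\<lambda>k. norm (z k))" "\<And>k. z k \<noteq> -1"
  shows "\<exists>L. (\<lambda>n. \<Prod>i<n. 1 + z i) \<longlonglongrightarrow> L \<and> L \<noteq> 0"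
proof (intro exI conjI)
  have conv: "convergent_prod (\<lambda>i. 1 + z i)"
    by (rule summable_imp_convergent_prod_complex[OF assms])
  have "1 + z i \<noteq> 0" for i
    using assms(2)[of i] by (metis add_eq_0_iff)
  with conv show nonzero: "(\<Prod>i. 1 + z i) \<noteq> 0"
    by (rule prodinf_nonzero)
  from conv have "(\<lambda>n. \<Prod>i<Suc n. 1 + z i) \<longlonglongrightarrow> (\<Prod>i. 1 + z i)"
    by (simp add: lessThan_Suc_atMost convergent_prod_LIMSEQ)
  then show "(\<lambda>n. \<Prod>i<n. 1 + z i) \<longlonglongrightarrow> (\<Prod>i. 1 + z i)"
    by (rule filterlim_sequentially_Suc[THEN iffD1])
qed

lemma qpoch_tendsto_nonzero:
  fixes x :: complex
  assumes "norm x < 1"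
  shows "\<exists>L. qpoch x \<longlonglongrightarrow> L \<and> L \<noteq> 0"
proof -
  have "norm (x ^ Suc k) < 1" for k
    by (rule norm_power_less_one[OF assms]) simp
  then have "- (x ^ Suc k) \<noteq> -1" for k
    by (metis neg_equal_iff_equal norm_one less_irrefl)
  moreover have "summable (\<lambda>k. norm (- (x ^ Suc k)))"
    using summable_norm_power_mono[OF assms, of Suc] by simp
  ultimately have "\<exists>L. (\<lambda>n. \<Prod>i<n. 1 + - (x ^ Suc i)) \<longlonglongrightarrow> L \<and> L \<noteq> 0"
    by (intro partial_prods_tendsto_nonzero)
  then show ?thesis by (simp add: qpoch_def[abs_def])
qed

lemma qpoch_odd_tendsto_nonzero:
  fixes q :: complex
  assumes "norm q < 1"
  shows "\<exists>L. qpoch_odd q \<longlonglongrightarrow> L \<and> L \<noteq> 0"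
proof -
  have "norm (q ^ (2 * k + 1)) < 1" for k
    by (rule norm_power_less_one[OF assms]) simp
  then have "q ^ (2 * k + 1) \<noteq> -1" for k
    by (metis norm_minus_cancel norm_one less_irrefl)
  moreover have "summable (\<lambda>k. norm (q ^ (2 * k + 1)))"
    by (rule summable_norm_power_mono[OF assms]) simp
  ultimately show ?thesis
    unfolding qpoch_odd_def[abs_def] by (intro partial_prods_tendsto_nonzero)
qed

lemma qpoch_nonzero:
  fixes x :: complex
  assumes "norm x < 1"
  shows "qpoch x n \<noteq> 0"
proof -
  have "norm (x ^ Suc i) < 1" for i
    by (rule norm_power_less_one[OF assms]) simp
  then have "1 - x ^ Suc i \<noteq> 0" for i
    by (metis right_minus_eq norm_one less_irrefl)
  then show ?thesis by (simp add: qpoch_def)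
qed

text \<open>\<open>theta_partial q\<close> is the sequence of partial products of Jacobi's product for $\theta_3$,
  and \<open>triple_coeff x n v\<close> is $(x;x)_n$ times the Gaussian binomial coefficient
  $\binom{2n}{n+v}_x$.\<close>

definition theta_partial :: "'a::comm_ring_1 \<Rightarrow> nat \<Rightarrow> 'a" where
  "theta_partial q n = qpoch (q^2) n * qpoch_odd q n ^ 2"

definition theta_term :: "complex \<Rightarrow> nat \<Rightarrow> complex" where
  "theta_term q v = (if v = 0 then 1 else 2 * q ^ v^2)"

definition theta_series :: "complex \<Rightarrow> complex" where
  "theta_series q = 1 + 2 * (\<Sum>v. q ^ (Suc v)^2)"

definition triple_coeff :: "'a::field \<Rightarrow> nat \<Rightarrow> nat \<Rightarrow> 'a" where
  "triple_coeff x n v = qpoch x n * qpoch x (2 * n) / (qpoch x (n + v) * qpoch x (n - v))"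

lemma theta_series_sums:
  assumes "norm q < 1"
  shows "theta_term q sums theta_series q"
proof -
  have "summable (\<lambda>v. q ^ (Suc v)^2)"
    by (rule summable_norm_cancel, rule summable_norm_power_mono[OF assms])
      (simp add: power2_eq_square)
  then have "(\<lambda>v. theta_term q (Suc v)) sums (2 * (\<Sum>v. q ^ (Suc v)^2))"
    by (simp add: theta_term_def summable_sums sums_mult)
  then have "theta_term q sums (2 * (\<Sum>v. q ^ (Suc v)^2) + theta_term q 0)"
    by (rule sums_Suc)
  then show ?thesis
    by (simp add: theta_series_def theta_term_def add.commute)
qed

lemma qbinom_eq_qpoch_quotient:
  fixes x :: complex
  assumes "norm x < 1" "k \<le> n"
  shows "qbinom x n k = qpoch x n / (qpoch x k * qpoch x (n - k))"
  using qbinom_mult_qpoch[OF assms(2), of x] qpoch_nonzero[OF assms(1)]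
  by (simp add: field_simps)

lemma sum_atMost_double_split:
  "(\<Sum>k\<le>2*n. f k) = (\<Sum>i<n. f (n - Suc i)) + f n + (\<Sum>i<n. f (n + Suc i))"
proof -
  have "(\<Sum>k\<le>2*n. f k) = (\<Sum>k<n + Suc n. f k)"
    by (simp add: lessThan_Suc_atMost[symmetric] mult_2)
  also have "\<dots> = (\<Sum>k<n. f k) + f n + (\<Sum>i<n. f (n + Suc i))"
    by (subst sum_lessThan_add, subst sum.lessThan_Suc_shift) (simp add: add_ac)
  finally show ?thesis
    by (simp add: sum.nat_diff_reindex)
qed

lemma theta_partial_eq_sum:
  fixes q :: complex
  assumes "q \<noteq> 0" "norm q < 1"
  shows "theta_partial q n = (\<Sum>v\<le>n. theta_term q v * triple_coeff (q^2) n v)"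
proof -
  define x where "x = q^2"
  have "norm x < 1"
    unfolding x_def by (rule norm_power_less_one[OF assms(2)]) simp
  note qbinom_eq = qbinom_eq_qpoch_quotient[OF this]
  define g where "g k = qpoch x n * qbinom x (2*n) k * q ^ ((k - n)^2 + (n - k)^2)" for k
  define c where "c i = triple_coeff x n (Suc i) * q ^ (Suc i)^2" for i
  have "theta_partial q n = (\<Sum>k\<le>2*n. g k)"
    by (simp add: theta_partial_def finite_triple_product[OF assms(1)] g_def x_def
        sum_distrib_left mult.assoc)
  also have "\<dots> = (\<Sum>i<n. g (n - Suc i)) + g n + (\<Sum>i<n. g (n + Suc i))"
    by (rule sum_atMost_double_split)
  also have "g n = triple_coeff x n 0"
    by (simp add: g_def triple_coeff_def qbinom_eq)
  also have "(\<Sum>i<n. g (n - Suc i)) = (\<Sum>i<n. c i)"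
  proof (intro sum.cong refl)
    fix i assume "i \<in> {..<n}"
    then have le: "n - Suc i \<le> 2*n" and "2*n - (n - Suc i) = n + Suc i"
      and "(n - Suc i - n)^2 + (n - (n - Suc i))^2 = (Suc i)^2" by auto
    then show "g (n - Suc i) = c i"
      unfolding g_def c_def triple_coeff_def qbinom_eq[OF le] by (simp add: mult_ac)
  qed
  also have "(\<Sum>i<n. g (n + Suc i)) = (\<Sum>i<n. c i)"
  proof (intro sum.cong refl)
    fix i assume "i \<in> {..<n}"
    then have le: "n + Suc i \<le> 2*n" and "2*n - (n + Suc i) = n - Suc i" by auto
    then show "g (n + Suc i) = c i"
      unfolding g_def c_def triple_coeff_def qbinom_eq[OF le] by (simp add: mult_ac)
  qed
  also have "(\<Sum>i<n. c i) + triple_coeff x n 0 + (\<Sum>i<n. c i)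
      = (\<Sum>v\<le>n. theta_term q v * triple_coeff x n v)"
    by (simp add: sum.atMost_shift theta_term_def c_def sum_distrib_left mult_ac flip: mult_2)
  finally show ?thesis
    by (simp only: x_def)
qed

lemma triple_coeff_tendsto:
  fixes x :: complex
  assumes "norm x < 1"
  shows "(\<lambda>n. triple_coeff x n v) \<longlonglongrightarrow> 1"
proof -
  obtain L where L: "qpoch x \<longlonglongrightarrow> L" "L \<noteq> 0"
    using qpoch_tendsto_nonzero[OF assms] by blast
  have "(\<lambda>n. qpoch x (2 * n)) \<longlonglongrightarrow> L"
    using LIMSEQ_subseq_LIMSEQ[OF L(1), of "\<lambda>n. 2 * n"] by (simp add: strict_mono_def o_def)
  moreover have "(\<lambda>n. qpoch x (n + v)) \<longlonglongrightarrow> L"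
    using LIMSEQ_ignore_initial_segment[OF L(1)] by simp
  moreover have "(\<lambda>n. qpoch x (n - v)) \<longlonglongrightarrow> L"
    by (rule LIMSEQ_offset[where k = v]) (simp add: L(1))
  ultimately have "(\<lambda>n. triple_coeff x n v) \<longlonglongrightarrow> L * L / (L * L)"
    unfolding triple_coeff_def using L by (intro tendsto_intros) simp_all
  with L(2) show ?thesis by simp
qed

lemma triple_coeff_bounded:
  fixes x :: complex
  assumes "norm x < 1"
  obtains K where "K \<ge> 0" "\<And>n v. norm (triple_coeff x n v) \<le> K"
proof -
  obtain L where L: "qpoch x \<longlonglongrightarrow> L" "L \<noteq> 0"
    using qpoch_tendsto_nonzero[OF assms] by blast
  obtain B where B: "B > 0" "\<And>n. norm (qpoch x n) \<le> B"
    using BseqE[OF convergent_imp_Bseq[OF convergentI[OF L(1)]]] by blast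
  obtain C where C: "C > 0" "\<And>n. norm (inverse (qpoch x n)) \<le> C"
    using BseqE[OF convergent_imp_Bseq[OF convergentI[OF tendsto_inverse[OF L]]]] by blast
  have "norm (triple_coeff x n v) \<le> B * B * C * C" for n v
  proof -
    have "norm (triple_coeff x n v) = norm (qpoch x n) * norm (qpoch x (2 * n))
        * norm (inverse (qpoch x (n + v))) * norm (inverse (qpoch x (n - v)))"
      by (simp add: triple_coeff_def norm_mult norm_divide divide_inverse)
    also have "\<dots> \<le> B * B * C * C"
      using B C by (intro mult_mono) auto
    finally show ?thesis .
  qed
  with B C show ?thesis by (intro that[of "B * B * C * C"]) auto
qed

lemma theta_partial_tendsto:
  fixes q :: complex
  assumes "q \<noteq> 0" "norm q < 1"
  shows "theta_partial q \<longlonglongrightarrow> theta_series q"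
proof -
  define x where "x = q^2"
  have "norm x < 1"
    unfolding x_def by (rule norm_power_less_one[OF assms(2)]) simp
  then obtain K where K: "K \<ge> 0" "\<And>n v. norm (triple_coeff x n v) \<le> K"
    using triple_coeff_bounded by blast
  define a where "a v n = (if v \<le> n then theta_term q v * triple_coeff x n v else 0)" for v n
  have lim: "(\<lambda>n. a v n) \<longlonglongrightarrow> theta_term q v" for v
  proof -
    have "(\<lambda>n. theta_term q v * triple_coeff x n v) \<longlonglongrightarrow> theta_term q v * 1"
      by (intro tendsto_intros triple_coeff_tendsto[OF \<open>norm x < 1\<close>])
    moreover have "eventually (\<lambda>n. theta_term q v * triple_coeff x n v = a v n) sequentially"
      using eventually_ge_at_top[of v] by eventually_elim (simp add: a_def)
    ultimately show ?thesis
      by (simp add: Lim_transform_eventually)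
  qed
  have bound: "eventually (\<lambda>(v, n). norm (a v n) \<le> 2 * K * norm q ^ v) (at_top \<times>\<^sub>F sequentially)"
  proof (intro always_eventually allI, clarify)
    fix v n
    have "norm q ^ v^2 \<le> norm q ^ v"
      using assms(2) by (intro power_decreasing) (auto simp: power2_eq_square)
    then have "norm (theta_term q v) \<le> 2 * norm q ^ v"
      by (simp add: theta_term_def norm_mult norm_power)
    then have "norm (theta_term q v) * norm (triple_coeff x n v) \<le> 2 * norm q ^ v * K"
      using K by (intro mult_mono) auto
    then show "norm (a v n) \<le> 2 * K * norm q ^ v"
      using K by (simp add: a_def norm_mult mult_ac)
  qed
  have "summable (\<lambda>v. 2 * K * norm q ^ v)"
    using assms(2) by (intro summable_mult summable_geometric) simp
  from tannerys_theorem[OF lim bound this]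
  have "(\<lambda>n. \<Sum>v. a v n) \<longlonglongrightarrow> (\<Sum>v. theta_term q v)" by simp
  moreover have "(\<Sum>v. a v n) = theta_partial q n" for n
  proof -
    have "(\<lambda>v. a v n) sums (\<Sum>v\<le>n. a v n)"
      by (rule sums_finite) (auto simp: a_def)
    then show ?thesis
      by (simp add: sums_iff a_def x_def theta_partial_eq_sum[OF assms])
  qed
  ultimately show ?thesis
    using sums_unique[OF theta_series_sums[OF assms(2)]] by simp
qed

lemma theta_series_nonzero:
  fixes q :: complex
  assumes "q \<noteq> 0" "norm q < 1"
  shows "theta_series q \<noteq> 0"
proof -
  have "norm (q^2) < 1"
    by (rule norm_power_less_one[OF assms(2)]) simp
  then obtain L where L: "qpoch (q^2) \<longlonglongrightarrow> L" "L \<noteq> 0"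
    using qpoch_tendsto_nonzero by blast
  obtain M where M: "qpoch_odd q \<longlonglongrightarrow> M" "M \<noteq> 0"
    using qpoch_odd_tendsto_nonzero[OF assms(2)] by blast
  have "theta_partial q \<longlonglongrightarrow> L * M^2"
    unfolding theta_partial_def[abs_def] by (intro tendsto_intros L M)
  with theta_partial_tendsto[OF assms] have "theta_series q = L * M^2"
    by (rule LIMSEQ_unique)
  with L M show ?thesis by simp
qed

section \<open>Dissection by $p$-th roots of unity\<close>

lemma prod_residue_class:
  fixes p M c :: nat
  assumes "c < p"
  shows "(\<Prod>i | i < p * M \<and> i mod p = c. f i) = (\<Prod>m<M. f (p * m + c))"
proof (rule prod.reindex_bij_witness[of _ "\<lambda>m. p * m + c" "\<lambda>i. i div p"])
  fix i assume "i \<in> {i. i < p * M \<and> i mod p = c}"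
  then show "p * (i div p) + c = i" "i div p \<in> {..<M}"
    by (auto simp: less_mult_imp_div_less mult.commute)
next
  fix m assume "m \<in> {..<M}"
  then have "p * m + c < p * Suc m" "p * Suc m \<le> p * M"
    using assms by (simp, intro mult_le_mono2) simp
  with assms show "(p * m + c) div p = m" "p * m + c \<in> {i. i < p * M \<and> i mod p = c}"
    by auto
qed (auto simp: mult.commute)

lemma prod_swap_residue_class:
  fixes p M c :: nat
  assumes "c < p"
  shows "(\<Prod>i<p * M. if i mod p = c then a i else b i) * (\<Prod>m<M. b (p * m + c))
       = (\<Prod>i<p * M. b i) * (\<Prod>m<M. a (p * m + c))"
proof -
  define R where "R = {i. i < p * M \<and> i mod p = c}"
  have prod_R: "prod f R = (\<Prod>m<M. f (p * m + c))" for f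
    unfolding R_def by (rule prod_residue_class[OF assms])
  have "R \<subseteq> {..<p * M}" by (auto simp: R_def)
  then have "(\<Prod>i<p * M. b i) = (\<Prod>i\<in>{..<p * M} - R. b i) * (\<Prod>m<M. b (p * m + c))"
    by (simp add: prod.subset_diff[of R] prod_R)
  moreover have "{..<p * M} \<inter> {i. i mod p = c} = R" "{..<p * M} \<inter> - {i. i mod p = c} = {..<p * M} - R"
    by (auto simp: R_def)
  then have "(\<Prod>i<p * M. if i mod p = c then a i else b i)
      = (\<Prod>i\<in>{..<p * M} - R. b i) * (\<Prod>m<M. a (p * m + c))"
    by (simp add: prod.If_cases prod_R mult.commute)
  ultimately show ?thesis by (simp add: mult_ac)
qed

lemma dvd_Suc_iff_mod:
  fixes p :: nat
  assumes "p > 0"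
  shows "p dvd Suc i \<longleftrightarrow> i mod p = p - 1"
  using assms by (auto simp: dvd_eq_mod_eq_0 mod_Suc split: if_splits)

lemma dvd_Suc_double_iff_mod:
  fixes p :: nat
  assumes "odd p"
  shows "p dvd 2 * i + 1 \<longleftrightarrow> i mod p = p div 2"
proof -
  define r where "r = i mod p"
  have "r < p" using odd_pos[OF assms] by (simp add: r_def)
  have "(2 * i + 1) mod p = (2 * r + 1) mod p"
    unfolding r_def by (metis mod_add_left_eq mod_mult_right_eq)
  then have "p dvd 2 * i + 1 \<longleftrightarrow> p dvd 2 * r + 1"
    by (simp add: dvd_eq_mod_eq_0)
  also have "\<dots> \<longleftrightarrow> 2 * r + 1 = p"
  proof
    assume "p dvd 2 * r + 1"
    then obtain t where t: "2 * r + 1 = p * t" by blast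
    have "p * t < p * 2" using \<open>r < p\<close> by (simp flip: t)
    moreover have "t \<noteq> 0"
    proof
      assume "t = 0" with t show False by simp
    qed
    ultimately have "t = 1" by simp
    with t show "2 * r + 1 = p" by simp
  qed auto
  also have "\<dots> \<longleftrightarrow> r = p div 2"
    using assms by presburger
  finally show ?thesis by (simp add: r_def)
qed

lemma qpoch_dissection:
  fixes p :: nat
  assumes "p > 0"
  shows "(\<Prod>i<p * M. if p dvd Suc i then (1 - x ^ Suc i) ^ p else 1 - (x ^ p) ^ Suc i)
           * qpoch (x ^ (p * p)) M
       = qpoch (x ^ p) (p * M) * qpoch (x ^ p) M ^ p"
proof -
  have last: "Suc (p * m + (p - 1)) = p * Suc m" for m
    using assms by simp
  have "(\<Prod>i<p * M. if p dvd Suc i then (1 - x ^ Suc i) ^ p else 1 - (x ^ p) ^ Suc i)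
      = (\<Prod>i<p * M. if i mod p = p - 1 then (1 - x ^ Suc i) ^ p else 1 - (x ^ p) ^ Suc i)"
    using assms by (simp add: dvd_Suc_iff_mod)
  moreover have "qpoch (x ^ (p * p)) M = (\<Prod>m<M. 1 - (x ^ p) ^ Suc (p * m + (p - 1)))"
    by (simp only: qpoch_def last power_mult)
  moreover have "qpoch (x ^ p) M ^ p = (\<Prod>m<M. (1 - x ^ Suc (p * m + (p - 1))) ^ p)"
    by (simp only: qpoch_def last prod_power_distrib power_mult)
  ultimately show ?thesis
    using prod_swap_residue_class[of "p - 1" p "\<lambda>i. (1 - x ^ Suc i) ^ p"
        "\<lambda>i. 1 - (x ^ p) ^ Suc i" M] assms
    by (simp add: qpoch_def)
qed

lemma qpoch_odd_dissection:
  fixes p :: nat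
  assumes "odd p"
  shows "(\<Prod>i<p * M. if p dvd 2 * i + 1 then (1 + q ^ (2 * i + 1)) ^ p else 1 + (q ^ p) ^ (2 * i + 1))
           * qpoch_odd (q ^ (p * p)) M
       = qpoch_odd (q ^ p) (p * M) * qpoch_odd (q ^ p) M ^ p"
proof -
  have "p div 2 < p" using odd_pos[OF assms] by simp
  have middle: "2 * (p * m + p div 2) + 1 = p * (2 * m + 1)" for m
    using assms by (simp add: algebra_simps)
  have "(\<Prod>i<p * M. if p dvd 2 * i + 1 then (1 + q ^ (2 * i + 1)) ^ p else 1 + (q ^ p) ^ (2 * i + 1))
      = (\<Prod>i<p * M. if i mod p = p div 2 then (1 + q ^ (2 * i + 1)) ^ p else 1 + (q ^ p) ^ (2 * i + 1))"
    by (simp only: dvd_Suc_double_iff_mod[OF assms])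
  moreover have "qpoch_odd (q ^ (p * p)) M = (\<Prod>m<M. 1 + (q ^ p) ^ (2 * (p * m + p div 2) + 1))"
    by (simp only: qpoch_odd_def middle power_mult)
  moreover have "qpoch_odd (q ^ p) M ^ p = (\<Prod>m<M. (1 + q ^ (2 * (p * m + p div 2) + 1)) ^ p)"
    by (simp only: qpoch_odd_def middle prod_power_distrib power_mult)
  ultimately show ?thesis
    using prod_swap_residue_class[OF \<open>p div 2 < p\<close>, of "\<lambda>i. (1 + q ^ (2 * i + 1)) ^ p"
        "\<lambda>i. 1 + (q ^ p) ^ (2 * i + 1)" M]
    by (simp add: qpoch_odd_def)
qed

lemma prime_odd_dvd_double_iff:
  fixes p :: nat
  assumes "prime p" "odd p"
  shows "p dvd 2 * m \<longleftrightarrow> p dvd m"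
  using assms prime_dvd_mult_iff[OF assms(1)] primes_dvd_imp_eq[OF assms(1) two_is_prime_nat]
  by auto

lemma qpoch_roots_unity:
  fixes p :: nat
  assumes "prime p" "odd p"
  shows "(\<Prod>k<p. qpoch ((q * cis (2 * pi / p) ^ k)^2) n)
       = (\<Prod>i<n. if p dvd Suc i then (1 - (q^2) ^ Suc i) ^ p else 1 - ((q^2) ^ p) ^ Suc i)"
proof -
  have pow: "((q * w ^ k)^2) ^ m = (q^2) ^ m * w ^ ((2 * m) * k)" for w :: complex and k m :: nat
    by (simp add: power_mult_distrib mult_ac flip: power_mult)
  have "(\<Prod>k<p. qpoch ((q * cis (2 * pi / p) ^ k)^2) n)
      = (\<Prod>i<n. \<Prod>k<p. 1 + (- ((q^2) ^ Suc i)) * cis (2 * pi / p) ^ ((2 * Suc i) * k))"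
    unfolding qpoch_def by (subst prod.swap) (simp only: pow mult_minus_left diff_conv_add_uminus)
  also have "\<dots> = (\<Prod>i<n. if p dvd Suc i then (1 - (q^2) ^ Suc i) ^ p else 1 - ((q^2) ^ Suc i) ^ p)"
    unfolding prod_one_plus_roots_unity[OF assms] prime_odd_dvd_double_iff[OF assms]
    by (intro prod.cong refl if_cong) (use assms(2) in simp_all)
  also have "\<dots> = (\<Prod>i<n. if p dvd Suc i then (1 - (q^2) ^ Suc i) ^ p else 1 - ((q^2) ^ p) ^ Suc i)"
    by (simp only: power_power_commute)
  finally show ?thesis .
qed

lemma qpoch_odd_roots_unity:
  fixes p :: nat
  assumes "prime p" "odd p"
  shows "(\<Prod>k<p. qpoch_odd (q * cis (2 * pi / p) ^ k) n)
       = (\<Prod>i<n. if p dvd 2 * i + 1 then (1 + q ^ (2 * i + 1)) ^ p else 1 + (q ^ p) ^ (2 * i + 1))"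
proof -
  have pow: "(q * w ^ k) ^ m = q ^ m * w ^ (m * k)" for w :: complex and k m :: nat
    by (simp add: power_mult_distrib mult_ac flip: power_mult)
  have "(\<Prod>k<p. qpoch_odd (q * cis (2 * pi / p) ^ k) n)
      = (\<Prod>i<n. \<Prod>k<p. 1 + q ^ (2 * i + 1) * cis (2 * pi / p) ^ ((2 * i + 1) * k))"
    unfolding qpoch_odd_def by (subst prod.swap) (simp only: pow)
  also have "\<dots> = (\<Prod>i<n. if p dvd 2 * i + 1 then (1 + q ^ (2 * i + 1)) ^ p
                              else 1 + (q ^ (2 * i + 1)) ^ p)"
    by (simp only: prod_one_plus_roots_unity[OF assms])
  also have "\<dots> = (\<Prod>i<n. if p dvd 2 * i + 1 then (1 + q ^ (2 * i + 1)) ^ p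
                              else 1 + (q ^ p) ^ (2 * i + 1))"
    by (simp only: power_power_commute)
  finally show ?thesis .
qed

lemma theta_partial_roots_unity:
  fixes p :: nat
  assumes "prime p" "odd p"
  shows "(\<Prod>k<p. theta_partial (q * cis (2 * pi / p) ^ k) (p * M)) * theta_partial (q ^ (p * p)) M
       = theta_partial (q ^ p) (p * M) * theta_partial (q ^ p) M ^ p"
proof -
  have "p > 0" using assms(1) prime_gt_0_nat by blast
  define G where "G = (\<Prod>i<p * M. if p dvd Suc i then (1 - (q^2) ^ Suc i) ^ p
                                     else 1 - ((q^2) ^ p) ^ Suc i)"
  define H where "H = (\<Prod>i<p * M. if p dvd 2 * i + 1 then (1 + q ^ (2 * i + 1)) ^ p
                                     else 1 + (q ^ p) ^ (2 * i + 1))"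
  have "(q ^ (p * p))^2 = (q^2) ^ (p * p)" "(q ^ p)^2 = (q^2) ^ p"
    by (simp_all only: power_power_commute)
  then have G: "G * qpoch ((q ^ (p * p))^2) M = qpoch ((q ^ p)^2) (p * M) * qpoch ((q ^ p)^2) M ^ p"
    unfolding G_def by (simp only: qpoch_dissection[OF \<open>p > 0\<close>])
  have H: "H * qpoch_odd (q ^ (p * p)) M = qpoch_odd (q ^ p) (p * M) * qpoch_odd (q ^ p) M ^ p"
    unfolding H_def by (rule qpoch_odd_dissection[OF assms(2)])
  have "(\<Prod>k<p. theta_partial (q * cis (2 * pi / p) ^ k) (p * M)) = G * H^2"
    unfolding theta_partial_def prod.distrib G_def H_def
    by (simp add: qpoch_roots_unity[OF assms] qpoch_odd_roots_unity[OF assms]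
        flip: prod_power_distrib)
  then have "(\<Prod>k<p. theta_partial (q * cis (2 * pi / p) ^ k) (p * M)) * theta_partial (q ^ (p * p)) M
      = (G * qpoch ((q ^ (p * p))^2) M) * (H * qpoch_odd (q ^ (p * p)) M)^2"
    by (simp add: theta_partial_def power_mult_distrib mult_ac)
  also have "\<dots> = theta_partial (q ^ p) (p * M) * theta_partial (q ^ p) M ^ p"
    unfolding G H theta_partial_def by (simp add: power_mult_distrib mult_ac flip: power_mult)
  finally show ?thesis .
qed

section \<open>Passing to the limit\<close>

lemma theta_series_roots_unity:
  fixes p :: nat and q :: complex
  assumes "prime p" "odd p" "q \<noteq> 0" "norm q < 1"
  shows "(\<Prod>k<p. theta_series (q * cis (2 * pi / p) ^ k)) * theta_series (q ^ (p * p))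
       = theta_series (q ^ p) ^ (p + 1)"
proof -
  have "p > 0" using assms(1) prime_gt_0_nat by blast
  have rotated: "q * cis (2 * pi / p) ^ k \<noteq> 0" "norm (q * cis (2 * pi / p) ^ k) < 1" for k
    using assms(3,4) by (simp_all add: norm_mult norm_power)
  have powers: "q ^ m \<noteq> 0" "norm (q ^ m) < 1" if "m > 0" for m
    using assms(3,4) that by (simp_all add: norm_power_less_one)
  have partial_tendsto: "(\<lambda>M. theta_partial z (p * M)) \<longlonglongrightarrow> theta_series z"
    if "z \<noteq> 0" "norm z < 1" for z
    using LIMSEQ_subseq_LIMSEQ[OF theta_partial_tendsto[OF that], of "\<lambda>M. p * M"] \<open>p > 0\<close>
    by (simp add: strict_mono_def o_def)
  have "(\<lambda>M. (\<Prod>k<p. theta_partial (q * cis (2 * pi / p) ^ k) (p * M)) * theta_partial (q ^ (p * p)) M)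
      \<longlonglongrightarrow> (\<Prod>k<p. theta_series (q * cis (2 * pi / p) ^ k)) * theta_series (q ^ (p * p))"
    using \<open>p > 0\<close>
    by (intro tendsto_mult tendsto_prod partial_tendsto theta_partial_tendsto rotated powers) simp_all
  moreover have "(\<lambda>M. theta_partial (q ^ p) (p * M) * theta_partial (q ^ p) M ^ p)
      \<longlonglongrightarrow> theta_series (q ^ p) * theta_series (q ^ p) ^ p"
    using \<open>p > 0\<close>
    by (intro tendsto_mult tendsto_power partial_tendsto theta_partial_tendsto powers)
  ultimately show ?thesis
    unfolding theta_partial_roots_unity[OF assms(1,2)] by (auto dest: LIMSEQ_unique)
qed

lemma theta3_eq_theta_series: "theta3 \<tau> = theta_series (exp (pi * \<i> * \<tau>))"
proof -
  have "exp (pi * \<i> * of_nat (Suc v)^2 * \<tau>) = exp (pi * \<i> * \<tau>) ^ (Suc v)^2" for v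
    by (simp add: mult_ac flip: exp_of_nat_mult)
  then show ?thesis
    by (simp add: theta3_def theta_series_def)
qed

lemma exp_pi_i_mult_of_nat: "exp (pi * \<i> * (of_nat n * \<tau>)) = exp (pi * \<i> * \<tau>) ^ n"
  by (simp add: mult_ac flip: exp_of_nat_mult)

theorem lemma2p1:
  fixes p :: nat and \<tau> :: complex
  assumes "prime p" and "odd p" and "Im \<tau> > 0"
  shows "(\<Prod>k<p. theta3 (\<tau> + 2 * of_nat k / of_nat p))
           = theta3 (of_nat p * \<tau>) ^ (p + 1) / theta3 (of_nat p ^ 2 * \<tau>)"
proof -
  define q where "q = exp (pi * \<i> * \<tau>)"
  have q: "q \<noteq> 0" "norm q < 1"
    using assms(3) by (simp_all add: q_def norm_exp_eq_Re)
  have "cis (2 * pi / p) ^ k = exp (pi * \<i> * (2 * of_nat k / of_nat p))" for k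
    by (simp only: Complex.DeMoivre) (simp add: cis_conv_exp mult_ac)
  then have "(\<Prod>k<p. theta3 (\<tau> + 2 * of_nat k / of_nat p))
      = (\<Prod>k<p. theta_series (q * cis (2 * pi / p) ^ k))"
    by (simp add: theta3_eq_theta_series q_def distrib_left exp_add)
  also have "\<dots> = theta_series (q ^ p) ^ (p + 1) / theta_series (q ^ (p * p))"
  proof -
    have "theta_series (q ^ (p * p)) \<noteq> 0"
      using q assms(1) by (intro theta_series_nonzero norm_power_less_one) (auto simp: prime_gt_0_nat)
    with theta_series_roots_unity[OF assms(1,2) q] show ?thesis
      by (simp add: eq_divide_eq)
  qed
  also have "\<dots> = theta3 (of_nat p * \<tau>) ^ (p + 1) / theta3 (of_nat p ^ 2 * \<tau>)"
    using exp_pi_i_mult_of_nat[of p \<tau>] exp_pi_i_mult_of_nat[of "p * p" \<tau>]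
    by (simp add: theta3_eq_theta_series q_def power2_eq_square)
  finally show ?thesis .
qed

end
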